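(* Let $q$ be a prime power, $1\le t\le s$, and $M$ an invertible $s\times s$ matrix over $\mathbb{F}_q$. If $\mathbf{y}=\mathbf{x}M^{-1}$ defines a linear $(t,t,s,q)$-AONT, then $\mathbf{y}=\mathbf{x}M$ defines a linear $(s-t,s-t,s,q)$-AONT.
   Context: For a bijection $\phi:\Gamma^s\to\Gamma^s$ over an alphabet $\Gamma$ of size $v$, its array representation is the $v^s\times 2s$ array having, for each $\mathbf{x}\in\Gamma^s$, a row $(\mathbf{x},\phi(\mathbf{x}))$. An $N\times k$ array is unbiased with respect to a set $D$ of columns if the rows restricted to $D$ contain every $|D|$-tuple over $\Gamma$ exactly $N/v^{|D|}$ times. For integers $0\le t_i\le t_o\le s$, $\phi$ is a $(t_i,t_o,s,v)$-AONT if its array representation (columns labelled $1,\dots,2s$) is unbiased with respect to $\{1,\dots,s\}$, $\{s+1,\dots,2s\}$, and $I\cup J$ for every $I\subseteq\{1,\dots,s\}$ with $|I|=t_i$ and every $J\subseteq\{s+1,\dots,2s\}$ with $|J|=s-t_o$. A map $\mathbf{x}\mapsto \mathbf{x}N$ on row vectors in $\mathbb{F}_q^s$ with $N$ invertible is a linear $(t_i,t_o,s,q)$-AONT if it is a $(t_i,t_o,s,q)$-AONT over $\Gamma=\mathbb{F}_q$. *)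

theory Defs
  imports "HOL-Analysis.Analysis"
begin

text \<open>Array representation of a bijection phi on Gamma^s, with s = CARD('n) and
  Gamma = the finite type 'a. Columns 1..s are Inl i (input coordinates),
  columns s+1..2s are Inr j (output coordinates).\<close>

definition arr_entry :: "('a ^ 'n \<Rightarrow> 'a ^ 'n) \<Rightarrow> 'a ^ 'n \<Rightarrow> ('n + 'n) \<Rightarrow> 'a" where
  "arr_entry phi x c = (case c of Inl i \<Rightarrow> x $ i | Inr j \<Rightarrow> phi x $ j)"

text \<open>Unbiased w.r.t. column set D: every |D|-tuple (a function on D) occurs
  exactly N / v^|D| times, N = v^s the number of rows; stated without division.\<close>

definition unbiased :: "('a::finite ^ 'n::finite \<Rightarrow> 'a ^ 'n) \<Rightarrow> ('n + 'n) set \<Rightarrow> bool" where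
  "unbiased phi D \<longleftrightarrow>
     (\<forall>f :: 'n + 'n \<Rightarrow> 'a.
        card {x. \<forall>c\<in>D. arr_entry phi x c = f c} * CARD('a) ^ card D = CARD('a) ^ CARD('n))"

definition AONT :: "nat \<Rightarrow> nat \<Rightarrow> ('a::finite ^ 'n::finite \<Rightarrow> 'a ^ 'n) \<Rightarrow> bool" where
  "AONT ti to phi \<longleftrightarrow>
     ti \<le> to \<and> to \<le> CARD('n) \<and> bij phi \<and>
     unbiased phi (range Inl) \<and> unbiased phi (range Inr) \<and>
     (\<forall>I J. card I = ti \<and> card J = CARD('n) - to \<longrightarrow> unbiased phi (Inl ` I \<union> Inr ` J))"

definition linear_AONT :: "nat \<Rightarrow> nat \<Rightarrow> 'a::{finite,field} ^ 'n::finite ^ 'n \<Rightarrow> bool" where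
  "linear_AONT ti to N \<longleftrightarrow> invertible N \<and> AONT ti to (\<lambda>x. x v* N)"

end

theory Submission
  imports Defs
begin

text \<open>The array of the inverse bijection is the array of the original one with its input and
  output columns exchanged, so unbiasedness on \<open>D\<close> for one is unbiasedness on the swapped
  column set for the other. A \<open>t\<^sub>i\<close>-input, \<open>(s - t\<^sub>o)\<close>-output column set thus
  becomes an \<open>(s - t\<^sub>o)\<close>-input, \<open>t\<^sub>i\<close>-output one, which turns a
  \<open>(t\<^sub>i, t\<^sub>o)\<close>-AONT into an \<open>(s - t\<^sub>o, s - t\<^sub>i)\<close>-AONT.\<close>

definition swap_sum :: "'a + 'b \<Rightarrow> 'b + 'a" where
  "swap_sum = case_sum Inr Inl"

lemma swap_sum_simps [simp]:
  "swap_sum (Inl a) = Inr a"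
  "swap_sum (Inr b) = Inl b"
  by (simp_all add: swap_sum_def)

lemma swap_sum_swap_sum [simp]: "swap_sum (swap_sum c) = c"
  by (cases c) simp_all

lemma inj_swap_sum: "inj swap_sum"
  by (metis injI swap_sum_swap_sum)

lemma swap_sum_image_Inl_Inr:
  "swap_sum ` (Inl ` I \<union> Inr ` J) = Inl ` J \<union> Inr ` I"
  unfolding image_Un image_image swap_sum_simps by (rule Un_commute)

lemma arr_entry_inverse_swap_sum:
  assumes "psi (phi x) = x"
  shows "arr_entry psi (phi x) (swap_sum c) = arr_entry phi x c"
  using assms by (cases c) (simp_all add: arr_entry_def)

lemma unbiased_inverse:
  fixes phi psi :: "'a::finite ^ 'n::finite \<Rightarrow> 'a ^ 'n"
  assumes psi_phi: "\<And>x. psi (phi x) = x" and phi_psi: "\<And>y. phi (psi y) = y"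
    and unbiased_psi: "unbiased psi (swap_sum ` D)"
  shows "unbiased phi D"
  unfolding unbiased_def
proof
  fix f :: "'n + 'n \<Rightarrow> 'a"
  define B where "B = {y. \<forall>c\<in>swap_sum ` D. arr_entry psi y c = (f \<circ> swap_sum) c}"
  have rows: "{x. \<forall>c\<in>D. arr_entry phi x c = f c} = phi -` B"
    by (auto simp: B_def arr_entry_inverse_swap_sum psi_phi)
  have "card (phi -` B) = card B"
    by (rule card_vimage_inj) (metis injI psi_phi, metis phi_psi rangeI subsetI)
  moreover have "card (swap_sum ` D) = card D"
    using inj_swap_sum by (rule card_image[OF inj_on_subset]) simp
  moreover have "card B * CARD('a) ^ card (swap_sum ` D) = CARD('a) ^ CARD('n)"
    using unbiased_psi unfolding unbiased_def B_def by (rule spec)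
  ultimately show "card {x. \<forall>c\<in>D. arr_entry phi x c = f c} * CARD('a) ^ card D
      = CARD('a) ^ CARD('n)"
    by (simp add: rows)
qed

lemma AONT_inverse:
  fixes phi psi :: "'a::finite ^ 'n::finite \<Rightarrow> 'a ^ 'n"
  assumes psi_phi: "\<And>x. psi (phi x) = x" and phi_psi: "\<And>y. phi (psi y) = y"
    and "AONT ti to psi"
  shows "AONT (CARD('n) - to) (CARD('n) - ti) phi"
proof -
  have unbiased: "unbiased phi D" if "unbiased psi (swap_sum ` D)" for D
    using unbiased_inverse[OF psi_phi phi_psi that] .
  have "bij phi"
    by (metis bij_betw_byWitness psi_phi phi_psi subset_UNIV)
  moreover have "unbiased phi (range Inl)" "unbiased phi (range Inr)"
    using \<open>AONT ti to psi\<close> by (auto intro!: unbiased simp: AONT_def image_image)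
  moreover have "unbiased phi (Inl ` I \<union> Inr ` J)"
    if "card I = CARD('n) - to" "card J = CARD('n) - (CARD('n) - ti)" for I J :: "'n set"
  proof (rule unbiased)
    have "card J = ti"
      using that(2) \<open>AONT ti to psi\<close> by (simp add: AONT_def)
    then show "unbiased psi (swap_sum ` (Inl ` I \<union> Inr ` J))"
      using that(1) \<open>AONT ti to psi\<close> by (simp add: AONT_def swap_sum_image_Inl_Inr)
  qed
  ultimately show ?thesis
    using \<open>AONT ti to psi\<close> by (simp add: AONT_def diff_le_mono2)
qed

lemma matrix_inv_mult:
  fixes A :: "'a::semiring_1 ^ 'n ^ 'm"
  assumes "invertible A"
  shows "A ** matrix_inv A = mat 1" "matrix_inv A ** A = mat 1"
  using someI_ex[OF assms[unfolded invertible_def]] by (simp_all add: matrix_inv_def)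

theorem mainTheorem5:
  fixes M :: "'a::{finite,field} ^ 'n::finite ^ 'n" and t :: nat
  assumes "1 \<le> t" and "t \<le> CARD('n)"
    and "invertible M"
    and "linear_AONT t t (matrix_inv M)"
  shows "linear_AONT (CARD('n) - t) (CARD('n) - t) M"
proof -
  have "AONT t t (\<lambda>y. y v* matrix_inv M)"
    using assms(4) by (simp add: linear_AONT_def)
  then have "AONT (CARD('n) - t) (CARD('n) - t) (\<lambda>x. x v* M)"
    by (rule AONT_inverse[rotated 2])
      (simp_all add: vector_matrix_mul_assoc matrix_inv_mult[OF assms(3)])
  then show ?thesis
    using assms(3) by (simp add: linear_AONT_def)
qed

end
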